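(* Let $k\ge1$ and $n\ge k+1$ be integers. The number of (labeled) forests $F$ such that: the vertex set of $F$ is $\{1,\dots,k+1\}\cup R$ for some subset $R\subseteq\{k+2,\dots,n\}$; every tree of $F$ has at least two vertices; exactly one tree of $F$ contains no vertex of $R$, and this tree contains both vertices $1$ and $2$; and every other tree of $F$ contains exactly one vertex of $R$ (its root), is equal to $n^{k-1}$.
   Context: Forests are simple undirected acyclic graphs on the stated labeled vertex set; two forests are counted as different if their vertex sets or edge sets differ. *)

theory Defs
  imports Main
begin

definition simple_graph :: "nat set \<Rightarrow> nat set set \<Rightarrow> bool" where
  "simple_graph V E \<longleftrightarrow> (\<forall>e\<in>E. \<exists>u v. u \<noteq> v \<and> e = {u, v} \<and> u \<in> V \<and> v \<in> V)"

definition adj :: "nat set set \<Rightarrow> nat \<Rightarrow> nat \<Rightarrow> bool" where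
  "adj E u v \<longleftrightarrow> {u, v} \<in> E"

definition has_cycle :: "nat set set \<Rightarrow> bool" where
  "has_cycle E \<longleftrightarrow> (\<exists>xs. length xs \<ge> 3 \<and> distinct xs \<and>
      (\<forall>i < length xs. {xs ! i, xs ! ((i + 1) mod length xs)} \<in> E))"

definition is_forest :: "nat set \<Rightarrow> nat set set \<Rightarrow> bool" where
  "is_forest V E \<longleftrightarrow> simple_graph V E \<and> \<not> has_cycle E"

definition components :: "nat set \<Rightarrow> nat set set \<Rightarrow> nat set set" where
  "components V E = (\<lambda>v. {u \<in> V. (adj E)\<^sup>*\<^sup>* v u}) ` V"

end

theory Submission
  imports Defs "HOL-Library.Transitive_Closure_Table"
begin

text \<open>Root the tree through 1 and 2 at 1, every other tree at its unique vertex in R, and add the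
  unused vertices of {k+2..n} as isolated roots. This identifies the forests in question with the
  forests on {1..n} in which every vertex is joined to exactly one root of {1} \<union> {k+2..n} and 2
  lies in the tree of 1; the vertex set V is recovered as the set of non-isolated vertices because
  all trees have at least two vertices.

  Such rooted forests are counted by deleting a root r other than 1: the neighbours C of r become
  roots, and C ranges over the subsets of the non-roots other than 2. With j non-roots on n
  vertices this recursion gives \<Sum>i. (j-1 choose i) (n-1)^(j-1-i) = n^(j-1). The base case of a
  single root needs all rooted forests, whose number s (j+s)^(j-1) for s roots (the generalised
  Cayley formula) satisfies the same recursion by an Abel-type binomial identity.\<close>

section \<open>Connectivity\<close>

abbreviation conn :: "nat set set \<Rightarrow> nat \<Rightarrow> nat \<Rightarrow> bool" where
  "conn E \<equiv> (adj E)\<^sup>*\<^sup>*"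

abbreviation neighbours :: "nat set set \<Rightarrow> nat \<Rightarrow> nat set" where
  "neighbours E r \<equiv> {c. {r, c} \<in> E}"

abbreviation edges_avoiding :: "nat \<Rightarrow> nat set set \<Rightarrow> nat set set" where
  "edges_avoiding r E \<equiv> {e \<in> E. r \<notin> e}"

lemma adj_commute: "adj E u v \<longleftrightarrow> adj E v u"
  unfolding adj_def by (simp add: insert_commute)

lemma conn_sym: "conn E u v \<Longrightarrow> conn E v u"
proof (induction rule: rtranclp_induct)
  case (step y z)
  then show ?case by (metis adj_commute converse_rtranclp_into_rtranclp)
qed simp

lemma conn_edge: "{u, v} \<in> E \<Longrightarrow> conn E u v"
  by (simp add: adj_def r_into_rtranclp)

lemma conn_mono: "conn E u v \<Longrightarrow> E \<subseteq> F \<Longrightarrow> conn F u v"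
proof (induction rule: rtranclp_induct)
  case (step y z)
  then show ?case by (metis adj_def rtranclp.rtrancl_into_rtrancl subsetD)
qed simp

lemma conn_imp_in_Union: "conn E u v \<Longrightarrow> u \<noteq> v \<Longrightarrow> u \<in> \<Union>E"
  by (induction rule: converse_rtranclp_induct) (auto simp: adj_def)

lemma conn_invariant:
  assumes "\<And>u v. {u, v} \<in> E \<Longrightarrow> f u = f v" and "conn E u w"
  shows "f u = f w"
  using assms(2) by (induction rule: rtranclp_induct) (auto simp: adj_def dest: assms(1))

lemma conn_avoiding:
  assumes "conn E v u" and "\<not> conn E v r"
  shows "conn (edges_avoiding r E) v u"
  using assms
proof (induction rule: rtranclp_induct)
  case (step y z)
  then have "y \<noteq> r" "z \<noteq> r" by (metis rtranclp.rtrancl_into_rtrancl)+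
  with step have "adj (edges_avoiding r E) y z" by (simp add: adj_def)
  moreover have "conn (edges_avoiding r E) v y" using step.IH step.prems by simp
  ultimately show ?case by (simp add: rtranclp.rtrancl_into_rtrancl)
qed simp

lemma conn_via_neighbour:
  assumes "conn E v r" and "v \<noteq> r"
  shows "\<exists>c. c \<in> neighbours E r \<and> conn (edges_avoiding r E) v c"
  using assms
proof (induction rule: converse_rtranclp_induct)
  case (step v u)
  then have vu: "{v, u} \<in> E" by (simp add: adj_def)
  show ?case
  proof (cases "u = r")
    case True
    then have "{r, v} \<in> E" using vu by (simp add: insert_commute)
    then show ?thesis by blast
  next
    case False
    then obtain c where c: "c \<in> neighbours E r" "conn (edges_avoiding r E) u c"
      using step.IH by blast
    have "{v, u} \<in> edges_avoiding r E" using vu False step.prems by simp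
    from conn_edge[OF this] c(2) have "conn (edges_avoiding r E) v c" by (rule rtranclp_trans)
    then show ?thesis using c(1) by blast
  qed
qed simp

lemma simple_graph_edgeE:
  assumes "simple_graph V E" and "e \<in> E"
  obtains u v where "u \<noteq> v" "e = {u, v}" "u \<in> V" "v \<in> V"
  using assms unfolding simple_graph_def by meson

lemma simple_graph_Union: "simple_graph V E \<Longrightarrow> \<Union>E \<subseteq> V"
  unfolding simple_graph_def by fastforce

lemma simple_graph_mono: "simple_graph V E \<Longrightarrow> V \<subseteq> W \<Longrightarrow> simple_graph W E"
  unfolding simple_graph_def by (meson subsetD)

lemma finite_simple_graphs: "finite V \<Longrightarrow> finite {E. simple_graph V E}"
proof (rule finite_subset)
  show "{E. simple_graph V E} \<subseteq> Pow (Pow V)" using simple_graph_Union by blast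
qed simp

lemma conn_in_vertices:
  assumes "simple_graph V E" and "conn E u v" and "u \<in> V"
  shows "v \<in> V"
  using conn_imp_in_Union[OF conn_sym[OF assms(2)]] simple_graph_Union[OF assms(1)] assms(3)
  by blast

lemma simple_graph_delete_vertex:
  assumes "simple_graph V E"
  shows "simple_graph (V - {r}) (edges_avoiding r E)"
  unfolding simple_graph_def
proof
  fix e assume "e \<in> edges_avoiding r E"
  then obtain u v where "u \<noteq> v" "e = {u, v}" "u \<in> V" "v \<in> V" "r \<notin> e"
    using simple_graph_edgeE[OF assms] by blast
  then show "\<exists>u v. u \<noteq> v \<and> e = {u, v} \<and> u \<in> V - {r} \<and> v \<in> V - {r}"
    by (intro exI[of _ u] exI[of _ v]) auto
qed

lemma simple_graph_Diff_notin_Union: "simple_graph (V - {r}) E \<Longrightarrow> r \<notin> \<Union>E"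
  using simple_graph_Union by blast

section \<open>Adding a vertex to a forest\<close>

definition star :: "nat \<Rightarrow> nat set \<Rightarrow> nat set set" where
  "star r C = (\<lambda>c. {r, c}) ` C"

lemma doubleton_in_star_iff: "{r, c} \<in> star r C \<longleftrightarrow> c \<in> C" "{c, r} \<in> star r C \<longleftrightarrow> c \<in> C"
  unfolding star_def by (auto simp: doubleton_eq_iff)

lemma vertex_in_star_edge: "e \<in> star r C \<Longrightarrow> r \<in> e"
  unfolding star_def by auto

lemma neighbours_add_star: "r \<notin> \<Union>E \<Longrightarrow> neighbours (E \<union> star r C) r = C"
  by (auto simp: doubleton_in_star_iff)

lemma edges_avoiding_add_star: "r \<notin> \<Union>E \<Longrightarrow> edges_avoiding r (E \<union> star r C) = E"
  by (auto dest: vertex_in_star_edge)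

lemma simple_graph_split_at:
  assumes "simple_graph V E"
  shows "E = edges_avoiding r E \<union> star r (neighbours E r)"
proof -
  have "e \<in> star r (neighbours E r)" if e: "e \<in> E" "r \<in> e" for e
  proof -
    obtain u v where "e = {u, v}" using simple_graph_edgeE[OF assms e(1)] by blast
    with e(2) have "e = {r, if u = r then v else u}" by auto
    with e(1) show ?thesis unfolding star_def by auto
  qed
  then show ?thesis by (auto simp: star_def)
qed

lemma rtrancl_path_iff_nth:
  "rtrancl_path R x xs y \<longleftrightarrow> (\<forall>i < length xs. R ((x # xs) ! i) (xs ! i)) \<and> y = last (x # xs)"
proof (induction xs arbitrary: x)
  case Nil
  then show ?case by (auto elim: rtrancl_path.cases intro: rtrancl_path.base)
next
  case (Cons z zs)
  have "rtrancl_path R x (z # zs) y \<longleftrightarrow> R x z \<and> rtrancl_path R z zs y"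
    by (auto elim: rtrancl_path.cases intro: rtrancl_path.step)
  also have "\<dots> \<longleftrightarrow> (\<forall>i < length (z # zs). R ((x # z # zs) ! i) ((z # zs) ! i))
      \<and> y = last (x # z # zs)"
    unfolding Cons.IH by (auto simp: less_Suc_eq_0_disj)
  finally show ?case .
qed

lemma rtrancl_path_restrict:
  assumes "rtrancl_path R x xs y" and "\<And>u v. R u v \<Longrightarrow> u \<in> set (x # xs) \<Longrightarrow> v \<in> set xs \<Longrightarrow> S u v"
  shows "rtrancl_path S x xs y"
  using assms by (induction rule: rtrancl_path.induct) (auto intro: rtrancl_path.intros)

lemma rtrancl_path_in_Union:
  assumes "rtrancl_path (adj E) x xs y" and "xs \<noteq> []"
  shows "set (x # xs) \<subseteq> \<Union>E"
proof -
  have "z \<in> \<Union>E" if "z \<in> set xs" for z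
    using rtrancl_path_Range[OF assms(1) that] by (auto simp: adj_def)
  moreover have "adj E x (xs ! 0)"
    using rtrancl_path_nth[OF assms(1)] assms(2) by fastforce
  ultimately show ?thesis by (auto simp: adj_def)
qed

definition is_cycle :: "nat set set \<Rightarrow> nat list \<Rightarrow> bool" where
  "is_cycle E xs \<longleftrightarrow> 3 \<le> length xs \<and> distinct xs
     \<and> (\<forall>i < length xs. {xs ! i, xs ! ((i + 1) mod length xs)} \<in> E)"

lemma has_cycle_iff_is_cycle: "has_cycle E \<longleftrightarrow> (\<exists>xs. is_cycle E xs)"
  unfolding has_cycle_def is_cycle_def ..

lemma has_cycle_mono: "has_cycle E \<Longrightarrow> E \<subseteq> F \<Longrightarrow> has_cycle F"
  unfolding has_cycle_def by (meson subsetD)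

lemma is_cycle_rotate:
  assumes "is_cycle E xs"
  shows "is_cycle E (rotate p xs)"
proof -
  let ?L = "length xs"
  have L: "0 < ?L" using assms by (auto simp: is_cycle_def)
  have "{rotate p xs ! i, rotate p xs ! ((i + 1) mod ?L)} \<in> E" if "i < ?L" for i
  proof -
    have "rotate p xs ! i = xs ! ((p + i) mod ?L)" using that by (simp add: nth_rotate)
    moreover have "rotate p xs ! ((i + 1) mod ?L) = xs ! (((p + i) mod ?L + 1) mod ?L)"
      using L by (simp add: nth_rotate mod_simps add.assoc)
    ultimately show ?thesis using assms L by (simp add: is_cycle_def)
  qed
  then show ?thesis using assms by (simp add: is_cycle_def)
qed

lemma is_cycle_Cons_iff:
  "is_cycle E (r # ys) \<longleftrightarrow> 2 \<le> length ys \<and> distinct (r # ys)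
     \<and> rtrancl_path (adj E) r ys (last ys) \<and> adj E (last ys) r"
proof (cases "ys = []")
  case False
  let ?P = "\<lambda>i. {(r # ys) ! i, (r # ys) ! ((i + 1) mod length (r # ys))} \<in> E"
  have "?P i \<longleftrightarrow> {(r # ys) ! i, ys ! i} \<in> E" if "i < length ys" for i
    using that by simp
  moreover have "?P (length ys) \<longleftrightarrow> {last ys, r} \<in> E"
    using False by (simp add: last_conv_nth)
  moreover have "(\<forall>i < length (r # ys). ?P i) \<longleftrightarrow> (\<forall>i < length ys. ?P i) \<and> ?P (length ys)"
    by (auto simp: less_Suc_eq)
  ultimately show ?thesis
    using False by (auto simp: is_cycle_def rtrancl_path_iff_nth adj_def)
qed (simp add: is_cycle_def)

lemma is_cycle_avoiding_star:
  assumes "is_cycle (E \<union> star r C) xs" and "r \<notin> set xs"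
  shows "is_cycle E xs"
proof -
  have "{xs ! i, xs ! ((i + 1) mod length xs)} \<in> E" if "i < length xs" for i
  proof -
    have "(i + 1) mod length xs < length xs" using that by (intro mod_less_divisor) linarith
    then have "r \<notin> {xs ! i, xs ! ((i + 1) mod length xs)}"
      using assms(2) that by (auto dest: nth_mem)
    then show ?thesis using assms(1) that vertex_in_star_edge unfolding is_cycle_def by blast
  qed
  then show ?thesis using assms(1) by (simp add: is_cycle_def)
qed

text \<open>Rotating the cycle to start at r exhibits a path between two neighbours of r.\<close>
lemma is_cycle_through_star:
  assumes cyc: "is_cycle (E \<union> star r C) xs" and "r \<in> set xs" and r: "r \<notin> \<Union>E"
  shows "\<exists>c1\<in>C. \<exists>c2\<in>C. c1 \<noteq> c2 \<and> conn E c1 c2"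
proof -
  let ?F = "E \<union> star r C"
  obtain as bs where "xs = as @ r # bs" using \<open>r \<in> set xs\<close> by (meson split_list)
  then have "is_cycle ?F (r # bs @ as)"
    using is_cycle_rotate[OF cyc, of "length as"] by (simp add: rotate_append)
  then obtain c1 zs where c: "2 \<le> length (c1 # zs)" "distinct (r # c1 # zs)"
      "rtrancl_path (adj ?F) r (c1 # zs) (last zs)" "adj ?F (last zs) r"
    unfolding is_cycle_Cons_iff by (cases "bs @ as") (auto split: if_splits)
  have "adj ?F r c1" and path: "rtrancl_path (adj ?F) c1 zs (last zs)"
    using c(3) by (auto elim: rtrancl_path.cases)
  have "rtrancl_path (adj E) c1 zs (last zs)"
    by (rule rtrancl_path_restrict[OF path]) (use c(2) vertex_in_star_edge in \<open>auto simp: adj_def\<close>)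
  then have "conn E c1 (last zs)" by (auto simp: rtranclp_eq_rtrancl_path)
  moreover have "c1 \<in> C" "last zs \<in> C"
    using \<open>adj ?F r c1\<close> c(4) r by (auto simp: adj_def doubleton_in_star_iff)
  moreover have "last zs \<in> set zs" using c(1) by (cases zs) auto
  then have "c1 \<noteq> last zs" using c(2) by auto
  ultimately show ?thesis by blast
qed

lemma has_cycle_add_star:
  assumes r: "r \<notin> \<Union>E" and c: "c1 \<in> C" "c2 \<in> C" "c1 \<noteq> c2" "conn E c1 c2"
  shows "has_cycle (E \<union> star r C)"
proof -
  let ?F = "E \<union> star r C"
  obtain zs where zs: "rtrancl_path (adj E) c1 zs c2" "distinct (c1 # zs)"
    using c(4) by (metis rtranclp_eq_rtrancl_path rtrancl_path_distinct)
  have "zs \<noteq> []" using zs(1) c(3) by (auto elim: rtrancl_path.cases)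
  then have "r \<notin> set (c1 # zs)" using rtrancl_path_in_Union[OF zs(1)] r by blast
  moreover have "rtrancl_path (adj ?F) r (c1 # zs) c2"
  proof (rule rtrancl_path.step)
    show "adj ?F r c1" using c(1) by (simp add: adj_def doubleton_in_star_iff)
    show "rtrancl_path (adj ?F) c1 zs c2"
      using zs(1) by (rule rtrancl_path_mono) (simp add: adj_def)
  qed
  moreover have "last zs = c2" using zs(1) \<open>zs \<noteq> []\<close> by (rule rtrancl_path_last)
  ultimately have "is_cycle ?F (r # c1 # zs)"
    using zs(2) c(2) \<open>zs \<noteq> []\<close>
    by (auto simp: is_cycle_Cons_iff adj_def doubleton_in_star_iff Suc_le_eq)
  then show ?thesis by (auto simp: has_cycle_iff_is_cycle)
qed

lemma has_cycle_add_star_iff: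
  assumes "\<not> has_cycle E" and "r \<notin> \<Union>E"
  shows "has_cycle (E \<union> star r C) \<longleftrightarrow> (\<exists>c1\<in>C. \<exists>c2\<in>C. c1 \<noteq> c2 \<and> conn E c1 c2)"
proof
  assume "has_cycle (E \<union> star r C)"
  then obtain xs where xs: "is_cycle (E \<union> star r C) xs" by (auto simp: has_cycle_iff_is_cycle)
  have "r \<in> set xs"
    using is_cycle_avoiding_star[OF xs] assms(1) by (auto simp: has_cycle_iff_is_cycle)
  then show "\<exists>c1\<in>C. \<exists>c2\<in>C. c1 \<noteq> c2 \<and> conn E c1 c2"
    by (rule is_cycle_through_star[OF xs _ assms(2)])
qed (use has_cycle_add_star assms(2) in blast)

section \<open>Rooted forests\<close>

definition rooted_forest :: "nat set \<Rightarrow> nat set \<Rightarrow> nat set set \<Rightarrow> bool" where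
  "rooted_forest V Ro E \<longleftrightarrow> is_forest V E \<and> (\<forall>v\<in>V. \<exists>!\<rho>. \<rho> \<in> Ro \<and> conn E v \<rho>)"

definition root_of :: "nat set set \<Rightarrow> nat set \<Rightarrow> nat \<Rightarrow> nat" where
  "root_of E Ro v = (THE \<rho>. \<rho> \<in> Ro \<and> conn E v \<rho>)"

lemma root_of:
  assumes "rooted_forest V Ro E" and "v \<in> V"
  shows "root_of E Ro v \<in> Ro" and "conn E v (root_of E Ro v)"
  using theI'[of "\<lambda>\<rho>. \<rho> \<in> Ro \<and> conn E v \<rho>"] assms
  unfolding rooted_forest_def root_of_def by auto

lemma root_of_eq:
  assumes "rooted_forest V Ro E" and "v \<in> V" and "\<rho> \<in> Ro" and "conn E v \<rho>"
  shows "root_of E Ro v = \<rho>"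
  using the1_equality[of "\<lambda>\<rho>. \<rho> \<in> Ro \<and> conn E v \<rho>"] assms
  unfolding rooted_forest_def root_of_def by auto

lemma rooted_forest_unique_root:
  assumes "rooted_forest V Ro E" and "v \<in> V"
    and "\<rho>1 \<in> Ro" "conn E v \<rho>1" and "\<rho>2 \<in> Ro" "conn E v \<rho>2"
  shows "\<rho>1 = \<rho>2"
  using root_of_eq[OF assms(1,2)] assms(3-6) by metis

lemma simple_graph_rooted_forest: "rooted_forest V Ro E \<Longrightarrow> simple_graph V E"
  by (simp add: rooted_forest_def is_forest_def)

lemma rooted_forestI:
  assumes "simple_graph V E" and "\<not> has_cycle E"
    and "\<And>v. v \<in> V \<Longrightarrow> \<exists>\<rho>. \<rho> \<in> Ro \<and> conn E v \<rho>"
    and "\<And>v \<rho>1 \<rho>2. v \<in> V \<Longrightarrow> \<rho>1 \<in> Ro \<Longrightarrow> conn E v \<rho>1 \<Longrightarrow> \<rho>2 \<in> Ro \<Longrightarrow> conn E v \<rho>2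
      \<Longrightarrow> \<rho>1 = \<rho>2"
  shows "rooted_forest V Ro E"
  unfolding rooted_forest_def is_forest_def using assms by (metis ex_ex1I)

lemma rooted_forest_non_root_in_Union:
  assumes "rooted_forest V Ro E" and "v \<in> V - Ro"
  shows "v \<in> \<Union>E"
  using root_of[OF assms(1)] conn_imp_in_Union assms(2) by (metis DiffD1 DiffD2)

lemma rooted_forest_empty: "rooted_forest {} Ro E \<longleftrightarrow> E = {}"
proof
  assume "rooted_forest {} Ro E"
  then have sg: "simple_graph {} E" by (rule simple_graph_rooted_forest)
  show "E = {}"
  proof (rule equals0I)
    fix e assume "e \<in> E"
    with sg show False by (rule simple_graph_edgeE) simp
  qed
next
  assume "E = {}"
  moreover have "\<not> has_cycle {}"
    unfolding has_cycle_def
    by (metis empty_iff le_zero_eq length_greater_0_conv list.size(3) zero_neq_numeral)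
  ultimately show "rooted_forest {} Ro E"
    by (simp add: rooted_forest_def is_forest_def simple_graph_def)
qed

context
  fixes V Ro :: "nat set" and E :: "nat set set" and r :: nat
  assumes F: "rooted_forest V Ro E" and r: "r \<in> Ro"
begin

lemma neighbours_root_subset: "neighbours E r \<subseteq> V - Ro"
proof
  fix c assume c: "c \<in> neighbours E r"
  obtain u v where "u \<noteq> v" "{r, c} = {u, v}" "u \<in> V" "v \<in> V"
    using simple_graph_edgeE[OF simple_graph_rooted_forest[OF F]] c by blast
  then have "c \<in> V" "c \<noteq> r" by (auto simp: doubleton_eq_iff)
  moreover have "conn E c r" using c conn_sym[OF conn_edge] by simp
  then have "c \<notin> Ro"
    using rooted_forest_unique_root[OF F \<open>c \<in> V\<close> _ rtranclp.rtrancl_refl r] \<open>c \<noteq> r\<close> by blast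
  ultimately show "c \<in> V - Ro" by blast
qed

lemma delete_root_reaches_root:
  assumes v: "v \<in> V - {r}"
  shows "\<exists>\<rho>. \<rho> \<in> Ro - {r} \<union> neighbours E r \<and> conn (edges_avoiding r E) v \<rho>"
proof (cases "root_of E Ro v = r")
  case True
  then show ?thesis using conn_via_neighbour root_of(2)[OF F] v by fastforce
next
  case False
  then have "\<not> conn E v r" using root_of[OF F] rooted_forest_unique_root[OF F _ _ _ r] v by blast
  then have "conn (edges_avoiding r E) v (root_of E Ro v)"
    using conn_avoiding root_of(2)[OF F] v by blast
  then show ?thesis using root_of(1)[OF F] v False by blast
qed

text \<open>Both new roots lie in the tree of the same old root g \<rho>; if that root is r, the two
  neighbours of r are joined without r, which closes a cycle through r.\<close>
lemma delete_root_unique_root: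
  assumes v: "v \<in> V - {r}"
    and \<rho>1: "\<rho>1 \<in> Ro - {r} \<union> neighbours E r" "conn (edges_avoiding r E) v \<rho>1"
    and \<rho>2: "\<rho>2 \<in> Ro - {r} \<union> neighbours E r" "conn (edges_avoiding r E) v \<rho>2"
  shows "\<rho>1 = \<rho>2"
proof -
  let ?C = "neighbours E r" and ?E' = "edges_avoiding r E"
  define g where "g \<rho> = (if \<rho> \<in> ?C then r else \<rho>)" for \<rho>
  have g: "g \<rho> \<in> Ro \<and> conn E v (g \<rho>)" if "\<rho> \<in> Ro - {r} \<union> ?C" "conn ?E' v \<rho>" for \<rho>
  proof -
    have "conn E v \<rho>" using conn_mono[OF that(2)] by blast
    show ?thesis
    proof (cases "\<rho> \<in> ?C")
      case True
      then have "conn E \<rho> r" using conn_sym[OF conn_edge] by simp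
      with \<open>conn E v \<rho>\<close> have "conn E v r" by (rule rtranclp_trans)
      then show ?thesis using True r by (simp add: g_def)
    qed (use that(1) \<open>conn E v \<rho>\<close> in \<open>simp add: g_def\<close>)
  qed
  have "g \<rho>1 = g \<rho>2" using g[OF \<rho>1] g[OF \<rho>2] rooted_forest_unique_root[OF F] v by blast
  show ?thesis
  proof (cases "\<rho>1 \<in> ?C \<and> \<rho>2 \<in> ?C")
    case True
    have "\<not> has_cycle E" using F by (simp add: rooted_forest_def is_forest_def)
    moreover have "E = ?E' \<union> star r ?C"
      by (rule simple_graph_split_at[OF simple_graph_rooted_forest[OF F]])
    moreover have "\<not> has_cycle ?E'" using \<open>\<not> has_cycle E\<close> has_cycle_mono[of ?E' E] by blast
    moreover have "conn ?E' \<rho>1 \<rho>2" using \<rho>1(2) \<rho>2(2) conn_sym rtranclp_trans by metis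
    ultimately show ?thesis using True has_cycle_add_star_iff[of ?E' r ?C] by auto
  next
    case False
    with \<open>g \<rho>1 = g \<rho>2\<close> show ?thesis using \<rho>1(1) \<rho>2(1) by (auto simp: g_def split: if_splits)
  qed
qed

lemma rooted_forest_delete_root:
  "rooted_forest (V - {r}) (Ro - {r} \<union> neighbours E r) (edges_avoiding r E)"
proof (rule rooted_forestI)
  show "simple_graph (V - {r}) (edges_avoiding r E)"
    by (rule simple_graph_delete_vertex[OF simple_graph_rooted_forest[OF F]])
  show "\<not> has_cycle (edges_avoiding r E)"
    using F has_cycle_mono[of "edges_avoiding r E" E]
    by (auto simp: rooted_forest_def is_forest_def)
qed (use delete_root_reaches_root delete_root_unique_root in blast)+

end

context
  fixes V Ro C :: "nat set" and E' :: "nat set set" and r :: nat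
  assumes F': "rooted_forest (V - {r}) (Ro - {r} \<union> C) E'"
    and r: "r \<in> Ro" and Ro: "Ro \<subseteq> V" and C: "C \<subseteq> V - Ro"
begin

lemma add_root_simple_graph: "simple_graph V (E' \<union> star r C)"
proof -
  have "simple_graph V (star r C)"
    unfolding simple_graph_def star_def
  proof
    fix e assume "e \<in> (\<lambda>c. {r, c}) ` C"
    then obtain c where "c \<in> C" "e = {r, c}" by blast
    then show "\<exists>u v. u \<noteq> v \<and> e = {u, v} \<and> u \<in> V \<and> v \<in> V"
      using r Ro C by (intro exI[of _ r] exI[of _ c]) auto
  qed
  then show ?thesis
    using simple_graph_mono[OF simple_graph_rooted_forest[OF F'], of V]
    by (auto simp: simple_graph_def)
qed

lemma add_root_acyclic: "\<not> has_cycle (E' \<union> star r C)"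
proof
  have r': "r \<notin> \<Union>E'"
    by (rule simple_graph_Diff_notin_Union[OF simple_graph_rooted_forest[OF F']])
  assume "has_cycle (E' \<union> star r C)"
  moreover have "\<not> has_cycle E'" using F' by (simp add: rooted_forest_def is_forest_def)
  ultimately obtain c1 c2 where c: "c1 \<in> C" "c2 \<in> C" "c1 \<noteq> c2" "conn E' c1 c2"
    using has_cycle_add_star_iff[OF _ r'] by blast
  moreover have "c1 \<in> V - {r}" using C r c(1) by blast
  ultimately show False using rooted_forest_unique_root[OF F' _ _ rtranclp.rtrancl_refl] by blast
qed

lemma add_root_reaches_root:
  assumes v: "v \<in> V"
  shows "\<exists>\<rho>. \<rho> \<in> Ro \<and> conn (E' \<union> star r C) v \<rho>"
proof (cases "v = r")
  case False
  let ?E = "E' \<union> star r C" and ?\<rho> = "root_of E' (Ro - {r} \<union> C) v"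
  have "v \<in> V - {r}" using v False by blast
  then have \<rho>: "?\<rho> \<in> Ro - {r} \<union> C" "conn ?E v ?\<rho>"
    using root_of[OF F'] conn_mono[of E' v ?\<rho> ?E] by auto
  show ?thesis
  proof (cases "?\<rho> \<in> C")
    case True
    then have "conn ?E ?\<rho> r" using conn_sym[OF conn_edge] by (auto simp: star_def)
    then show ?thesis using \<rho>(2) r by (meson rtranclp_trans)
  qed (use \<rho> in blast)
qed (use r in blast)

text \<open>f u is the root of u in the enlarged forest, read off from its root in E'. It is
  constant along edges, hence along paths, and fixes every root.\<close>
lemma add_root_unique_root:
  assumes "\<rho>1 \<in> Ro" "conn (E' \<union> star r C) v \<rho>1"
    and "\<rho>2 \<in> Ro" "conn (E' \<union> star r C) v \<rho>2"
  shows "\<rho>1 = \<rho>2"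
proof -
  let ?Ro' = "Ro - {r} \<union> C" and ?E = "E' \<union> star r C"
  define f where "f u = (if u = r \<or> root_of E' ?Ro' u \<in> C then r else root_of E' ?Ro' u)" for u
  have root_C: "root_of E' ?Ro' c = c" if "c \<in> ?Ro'" for c
  proof -
    have "c \<in> V - {r}" using that r Ro C by blast
    from root_of_eq[OF F' this that rtranclp.rtrancl_refl] show ?thesis .
  qed
  have f_edge: "f u = f w" if e: "{u, w} \<in> ?E" for u w
  proof (cases "{u, w} \<in> E'")
    case True
    obtain a b where "{u, w} = {a, b}" "a \<in> V - {r}" "b \<in> V - {r}"
      using simple_graph_edgeE[OF simple_graph_rooted_forest[OF F'] True] by metis
    then have "{u, w} \<subseteq> V - {r}" by simp
    then have uw: "u \<in> V - {r}" "w \<in> V - {r}" by simp_all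
    have "conn E' u (root_of E' ?Ro' w)"
      using conn_edge[OF True] root_of(2)[OF F' uw(2)] by (rule rtranclp_trans)
    then have "root_of E' ?Ro' u = root_of E' ?Ro' w"
      using root_of_eq[OF F' uw(1)] root_of(1)[OF F' uw(2)] by blast
    then show ?thesis using uw by (simp add: f_def)
  next
    case False
    then obtain c where "c \<in> C" "{u, w} = {r, c}" using e by (auto simp: star_def)
    then have "f c = r" "f r = r" using root_C by (simp_all add: f_def)
    then show ?thesis using \<open>{u, w} = {r, c}\<close> by (auto simp: doubleton_eq_iff)
  qed
  have "f v = f \<rho>" if "conn ?E v \<rho>" for v \<rho>
    by (rule conn_invariant[OF f_edge that])
  moreover have "f \<rho> = \<rho>" if "\<rho> \<in> Ro" for \<rho>
  proof (cases "\<rho> = r")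
    case False
    then have "root_of E' ?Ro' \<rho> = \<rho>" "\<rho> \<notin> C" using that root_C C by auto
    then show ?thesis using False by (simp add: f_def)
  qed (simp add: f_def)
  ultimately show ?thesis using assms by metis
qed

lemma rooted_forest_add_root: "rooted_forest V Ro (E' \<union> star r C)"
  using add_root_simple_graph add_root_acyclic add_root_reaches_root add_root_unique_root
  by (rule rooted_forestI)

lemma conn_add_root_iff:
  assumes x: "x \<in> V" and \<rho>: "\<rho> \<in> Ro - {r}"
  shows "conn (E' \<union> star r C) x \<rho> \<longleftrightarrow> x \<notin> C \<and> conn E' x \<rho>"
proof
  let ?E = "E' \<union> star r C"
  assume x\<rho>: "conn ?E x \<rho>"
  have no_r: "\<not> conn ?E x r"
    using rooted_forest_unique_root[OF rooted_forest_add_root x _ x\<rho> r] \<rho> by blast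
  then have "x \<notin> C" using conn_sym[OF conn_edge, of r x ?E] by (auto simp: doubleton_in_star_iff)
  moreover have "r \<notin> \<Union>E'"
    by (rule simple_graph_Diff_notin_Union[OF simple_graph_rooted_forest[OF F']])
  then have "conn E' x \<rho>" using conn_avoiding[OF x\<rho> no_r] edges_avoiding_add_star by simp
  ultimately show "x \<notin> C \<and> conn E' x \<rho>" ..
qed (use conn_mono in blast)

end

lemma bij_betw_add_root:
  assumes "r \<in> Ro" and "Ro \<subseteq> V"
  shows "bij_betw (\<lambda>(C, E'). E' \<union> star r C)
           (SIGMA C:Pow (V - Ro). {E'. rooted_forest (V - {r}) (Ro - {r} \<union> C) E'})
           {E. rooted_forest V Ro E}"
    (is "bij_betw ?f ?A ?B")
proof (rule bij_betw_byWitness[where f' = "\<lambda>E. (neighbours E r, edges_avoiding r E)"])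
  have r: "r \<notin> \<Union>E'" if "rooted_forest (V - {r}) Ro' E'" for Ro' E'
    by (rule simple_graph_Diff_notin_Union[OF simple_graph_rooted_forest[OF that]])
  show "\<forall>a\<in>?A. (neighbours (?f a) r, edges_avoiding r (?f a)) = a"
    using r neighbours_add_star edges_avoiding_add_star by auto
  show "\<forall>E\<in>?B. ?f (neighbours E r, edges_avoiding r E) = E"
    using simple_graph_split_at[OF simple_graph_rooted_forest] by auto
  show "?f ` ?A \<subseteq> ?B"
    using rooted_forest_add_root assms by auto
  show "(\<lambda>E. (neighbours E r, edges_avoiding r E)) ` ?B \<subseteq> ?A"
  proof (rule image_subsetI)
    fix E assume "E \<in> ?B"
    with neighbours_root_subset rooted_forest_delete_root assms(1)
    show "(neighbours E r, edges_avoiding r E) \<in> ?A" by simp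
  qed
qed

section \<open>Counting rooted forests\<close>

lemma card_rooted_forests_rec:
  assumes "finite V" and "Ro \<subseteq> V" and "r \<in> Ro"
  shows "card {E. rooted_forest V Ro E \<and> P E} =
    (\<Sum>C\<in>Pow (V - Ro).
       card {E'. rooted_forest (V - {r}) (Ro - {r} \<union> C) E' \<and> P (E' \<union> star r C)})"
proof -
  let ?A = "\<lambda>C. {E'. rooted_forest (V - {r}) (Ro - {r} \<union> C) E' \<and> P (E' \<union> star r C)}"
  have "bij_betw (\<lambda>(C, E'). E' \<union> star r C)
      {x \<in> SIGMA C:Pow (V - Ro). {E'. rooted_forest (V - {r}) (Ro - {r} \<union> C) E'}.
         (\<lambda>(C, E'). P (E' \<union> star r C)) x}
      {E \<in> {E. rooted_forest V Ro E}. P E}"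
    by (rule bij_betw_Collect[OF bij_betw_add_root[OF assms(3,2)]]) (simp add: case_prod_beta)
  moreover have "{x \<in> SIGMA C:Pow (V - Ro). {E'. rooted_forest (V - {r}) (Ro - {r} \<union> C) E'}.
         (\<lambda>(C, E'). P (E' \<union> star r C)) x} = (SIGMA C:Pow (V - Ro). ?A C)"
    by auto
  ultimately have "card {E. rooted_forest V Ro E \<and> P E} = card (SIGMA C:Pow (V - Ro). ?A C)"
    by (simp add: bij_betw_same_card)
  also have "\<dots> = (\<Sum>C\<in>Pow (V - Ro). card (?A C))"
  proof (rule card_SigmaI)
    show "finite (Pow (V - Ro))" using assms(1) by simp
    show "\<forall>C\<in>Pow (V - Ro). finite (?A C)"
      using finite_simple_graphs[of "V - {r}"] assms(1)
      by (auto intro: finite_subset[rotated] dest: simple_graph_rooted_forest)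
  qed
  finally show ?thesis .
qed

lemma sum_Pow_by_card:
  fixes g :: "nat \<Rightarrow> 'a::comm_semiring_1"
  assumes "finite X"
  shows "(\<Sum>C\<in>Pow X. g (card C)) = (\<Sum>i\<le>card X. of_nat (card X choose i) * g i)"
proof -
  have "(\<Sum>C\<in>Pow X. g (card C)) = (\<Sum>i\<le>card X. \<Sum>C\<in>{C \<in> Pow X. card C = i}. g (card C))"
    by (rule sum.group[symmetric]) (use assms card_mono in auto)
  also have "\<dots> = (\<Sum>i\<le>card X. of_nat (card X choose i) * g i)"
  proof (rule sum.cong[OF refl])
    fix i
    have "{C \<in> Pow X. card C = i} = {C. C \<subseteq> X \<and> card C = i}" by auto
    then show "(\<Sum>C\<in>{C \<in> Pow X. card C = i}. g (card C)) = of_nat (card X choose i) * g i"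
      using n_subsets[OF assms] by simp
  qed
  finally show ?thesis .
qed

lemma binomial_sum_power: "(\<Sum>i\<le>j. (j choose i) * (a::nat) ^ (j - i)) = (a + 1) ^ j"
  using binomial_ring[of 1 a j] by (simp add: add.commute)

lemma sum_Pow_power:
  assumes "finite X"
  shows "(\<Sum>C\<in>Pow X. (a::nat) ^ (card X - card C)) = (a + 1) ^ card X"
  using sum_Pow_by_card[OF assms, of "\<lambda>c. a ^ (card X - c)"] binomial_sum_power by simp

lemma binomial_sum_power_weighted:
  "(\<Sum>i\<le>j. i * (j choose i) * (a::nat) ^ (j - i)) = j * (a + 1) ^ (j - 1)"
proof (cases j)
  case (Suc j')
  have "(\<Sum>i\<le>Suc j'. i * (Suc j' choose i) * a ^ (Suc j' - i))
      = (\<Sum>i\<le>j'. Suc i * (Suc j' choose Suc i) * a ^ (j' - i))"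
    by (subst sum.atMost_Suc_shift) simp
  also have "\<dots> = (\<Sum>i\<le>j'. Suc j' * ((j' choose i) * a ^ (j' - i)))"
    by (rule sum.cong[OF refl]) (simp only: Suc_times_binomial mult.assoc)
  also have "\<dots> = Suc j' * (a + 1) ^ j'"
    by (simp only: sum_distrib_left[symmetric] binomial_sum_power)
  finally show ?thesis using Suc by simp
qed simp

text \<open>The number of forests with s given roots and j further vertices (generalised Cayley
  formula); the case j = 0 is separate because s (j + s)^(j - 1) would give s there.\<close>
definition rooted_forest_count :: "nat \<Rightarrow> nat \<Rightarrow> nat" where
  "rooted_forest_count j s = (if j = 0 then 1 else s * (j + s) ^ (j - 1))"

lemma rooted_forest_count_rec:
  "(\<Sum>i\<le>j. (j choose i) * rooted_forest_count (j - i) (s + i)) = rooted_forest_count j (Suc s)"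
proof (cases "j = 0")
  case False
  define a where "a = j + s"
  have summand: "a * rooted_forest_count (j - i) (s + i) = (s + i) * a ^ (j - i)" if "i \<le> j" for i
  proof (cases "i = j")
    case False
    then have ji: "j - i = Suc (j - i - 1)" using that by simp
    have "j - i + (s + i) = a" using that by (simp add: a_def)
    then have "a * rooted_forest_count (j - i) (s + i) = (s + i) * (a * a ^ (j - i - 1))"
      using ji by (simp add: rooted_forest_count_def)
    also have "a * a ^ (j - i - 1) = a ^ (j - i)" by (metis ji power_Suc)
    finally show ?thesis .
  qed (simp add: rooted_forest_count_def a_def)
  have "a * (\<Sum>i\<le>j. (j choose i) * rooted_forest_count (j - i) (s + i))
      = (\<Sum>i\<le>j. (j choose i) * ((s + i) * a ^ (j - i)))"
    unfolding sum_distrib_left by (rule sum.cong) (simp_all add: summand mult.left_commute)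
  also have "\<dots> = s * (\<Sum>i\<le>j. (j choose i) * a ^ (j - i)) + (\<Sum>i\<le>j. i * (j choose i) * a ^ (j - i))"
    by (simp add: sum_distrib_left sum.distrib algebra_simps)
  also have "\<dots> = s * (a + 1) ^ j + j * (a + 1) ^ (j - 1)"
    by (simp only: binomial_sum_power binomial_sum_power_weighted)
  also have "\<dots> = a * rooted_forest_count j (Suc s)"
  proof -
    obtain j' where "j = Suc j'" using False by (cases j) auto
    then show ?thesis by (simp add: rooted_forest_count_def a_def algebra_simps)
  qed
  finally show ?thesis using False by (simp add: a_def)
qed (simp add: rooted_forest_count_def)

lemma card_delete_root_parts:
  assumes "finite V" and "Ro \<subseteq> V" and "r \<in> Ro" and "C \<subseteq> V - Ro"
  shows "Ro - {r} \<union> C \<subseteq> V - {r}"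
    and "card (V - {r} - (Ro - {r} \<union> C)) = card (V - Ro) - card C"
    and "card (Ro - {r} \<union> C) = card (Ro - {r}) + card C"
proof -
  have fin: "finite C" "finite (Ro - {r})"
    using finite_subset[OF assms(4)] finite_subset[OF assms(2)] assms(1) by simp_all
  show "Ro - {r} \<union> C \<subseteq> V - {r}" using assms by blast
  have "V - {r} - (Ro - {r} \<union> C) = V - Ro - C" using assms(3) by blast
  then show "card (V - {r} - (Ro - {r} \<union> C)) = card (V - Ro) - card C"
    using assms(4) fin(1) by (simp add: card_Diff_subset)
  show "card (Ro - {r} \<union> C) = card (Ro - {r}) + card C"
    using assms(4) fin by (intro card_Un_disjoint) blast+
qed

lemma card_rooted_forests:
  assumes "finite V" and "Ro \<subseteq> V"
  shows "card {E. rooted_forest V Ro E} = rooted_forest_count (card (V - Ro)) (card Ro)"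
  using assms
proof (induction V arbitrary: Ro rule: finite_psubset_induct)
  case (psubset V)
  show ?case
  proof (cases "Ro = {}")
    case True
    show ?thesis
    proof (cases "V = {}")
      case False
      then have "\<not> rooted_forest V Ro E" for E using True by (auto simp: rooted_forest_def)
      then show ?thesis using False True psubset.hyps(1) by (simp add: rooted_forest_count_def)
    qed (use True in \<open>simp add: rooted_forest_empty rooted_forest_count_def\<close>)
  next
    case False
    then obtain r where r: "r \<in> Ro" by blast
    let ?j = "card (V - Ro)" and ?s = "card (Ro - {r})"
    have "card {E. rooted_forest V Ro E}
        = (\<Sum>C\<in>Pow (V - Ro). card {E'. rooted_forest (V - {r}) (Ro - {r} \<union> C) E'})"
      using card_rooted_forests_rec[OF psubset.hyps(1) psubset.prems r, where P = "\<lambda>_. True"]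
      by simp
    also have "\<dots> = (\<Sum>C\<in>Pow (V - Ro). rooted_forest_count (?j - card C) (?s + card C))"
    proof (rule sum.cong[OF refl])
      fix C assume "C \<in> Pow (V - Ro)"
      note parts = card_delete_root_parts[OF psubset.hyps(1) psubset.prems r] this[simplified]
      have "V - {r} \<subset> V" using r psubset.prems by blast
      from psubset.IH[OF this parts(1)]
      show "card {E'. rooted_forest (V - {r}) (Ro - {r} \<union> C) E'}
          = rooted_forest_count (?j - card C) (?s + card C)"
        by (simp only: parts)
    qed
    also have "\<dots> = (\<Sum>i\<le>?j. (?j choose i) * rooted_forest_count (?j - i) (?s + i))"
      using sum_Pow_by_card[of "V - Ro" "\<lambda>c. rooted_forest_count (?j - c) (?s + c)"] psubset.hyps(1)
      by simp
    also have "\<dots> = rooted_forest_count ?j (Suc ?s)" by (rule rooted_forest_count_rec)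
    also have "Suc ?s = card Ro"
      using card_Suc_Diff1[OF finite_subset[OF psubset.prems psubset.hyps(1)] r] by simp
    finally show ?thesis .
  qed
qed

lemma card_rooted_forests_through_rec:
  assumes V: "finite V" "Ro \<subseteq> V" and x: "x \<in> V - Ro" and \<rho>: "\<rho> \<in> Ro"
    and r: "r \<in> Ro - {\<rho>}"
  shows "card {E. rooted_forest V Ro E \<and> conn E x \<rho>} =
    (\<Sum>C\<in>Pow (V - Ro - {x}).
       card {E'. rooted_forest (V - {r}) (Ro - {r} \<union> C) E' \<and> conn E' x \<rho>})"
proof -
  let ?F = "\<lambda>C. {E'. rooted_forest (V - {r}) (Ro - {r} \<union> C) E' \<and> conn E' x \<rho>}"
  let ?G = "\<lambda>C. {E'. rooted_forest (V - {r}) (Ro - {r} \<union> C) E' \<and> conn (E' \<union> star r C) x \<rho>}"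
  have "card {E. rooted_forest V Ro E \<and> conn E x \<rho>} = (\<Sum>C\<in>Pow (V - Ro). card (?G C))"
    using r by (intro card_rooted_forests_rec[OF V]) blast
  also have "\<dots> = (\<Sum>C\<in>Pow (V - Ro). if x \<notin> C then card (?F C) else 0)"
  proof (rule sum.cong[OF refl])
    fix C assume "C \<in> Pow (V - Ro)"
    then have "?G C = (if x \<notin> C then ?F C else {})"
      using conn_add_root_iff[of V r Ro C _ x \<rho>] V x \<rho> r by auto
    then show "card (?G C) = (if x \<notin> C then card (?F C) else 0)" by simp
  qed
  also have "\<dots> = (\<Sum>C\<in>{C \<in> Pow (V - Ro). x \<notin> C}. card (?F C))"
    by (rule sum.inter_filter[symmetric]) (use V in simp)
  also have "{C \<in> Pow (V - Ro). x \<notin> C} = Pow (V - Ro - {x})" by blast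
  finally show ?thesis .
qed

lemma rooted_forest_single_root: "rooted_forest V {\<rho>} E \<Longrightarrow> x \<in> V \<Longrightarrow> conn E x \<rho>"
  using root_of by fastforce

lemma card_rooted_forests_single_root:
  assumes "finite V" and "\<rho> \<in> V"
  shows "card {E. rooted_forest V {\<rho>} E} = card V ^ (card (V - {\<rho>}) - 1)"
proof -
  have "card V = Suc (card (V - {\<rho>}))" using card_Suc_Diff1[OF assms] by simp
  then show ?thesis
    using card_rooted_forests[of V "{\<rho>}"] assms by (simp add: rooted_forest_count_def)
qed

lemma card_rooted_forests_through:
  assumes "finite V" and "Ro \<subseteq> V" and "x \<in> V - Ro" and "\<rho> \<in> Ro"
  shows "card {E. rooted_forest V Ro E \<and> conn E x \<rho>} = card V ^ (card (V - Ro) - 1)"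
  using assms
proof (induction V arbitrary: Ro rule: finite_psubset_induct)
  case (psubset V)
  let ?j = "card (V - Ro)" and ?n = "card V"
  show ?case
  proof (cases "Ro = {\<rho>}")
    case True
    then have "{E. rooted_forest V Ro E \<and> conn E x \<rho>} = {E. rooted_forest V Ro E}"
      using rooted_forest_single_root psubset.prems(2) by blast
    moreover have "\<rho> \<in> V" using True psubset.prems(1) by blast
    ultimately show ?thesis using card_rooted_forests_single_root[OF psubset.hyps(1)] True by simp
  next
    case False
    then obtain r where r: "r \<in> Ro - {\<rho>}" using psubset.prems(3) by blast
    then have "r \<in> Ro" "r \<in> V" "x \<noteq> r" using psubset.prems(1,2) by auto
    have "card {E'. rooted_forest (V - {r}) (Ro - {r} \<union> C) E' \<and> conn E' x \<rho>}
        = (?n - 1) ^ (?j - 1 - card C)" if "C \<in> Pow (V - Ro - {x})" for C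
    proof -
      have C: "C \<subseteq> V - Ro" and "x \<notin> C" using that by auto
      note parts = card_delete_root_parts[OF psubset.hyps(1) psubset.prems(1) \<open>r \<in> Ro\<close> C]
      have "V - {r} \<subset> V" using \<open>r \<in> V\<close> by blast
      moreover have "x \<in> V - {r} - (Ro - {r} \<union> C)" "\<rho> \<in> Ro - {r} \<union> C"
        using \<open>x \<notin> C\<close> \<open>x \<noteq> r\<close> r psubset.prems(2,3) by auto
      ultimately have "card {E'. rooted_forest (V - {r}) (Ro - {r} \<union> C) E' \<and> conn E' x \<rho>}
          = card (V - {r}) ^ (card (V - {r} - (Ro - {r} \<union> C)) - 1)"
        using psubset.IH parts(1) by blast
      then show ?thesis using parts(2) \<open>r \<in> V\<close> psubset.hyps(1) by simp
    qed
    moreover have "card (V - Ro - {x}) = ?j - 1" using psubset.hyps(1) psubset.prems(2) by simp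
    ultimately have "card {E. rooted_forest V Ro E \<and> conn E x \<rho>}
        = (\<Sum>C\<in>Pow (V - Ro - {x}). (?n - 1) ^ (card (V - Ro - {x}) - card C))"
      using card_rooted_forests_through_rec[OF psubset.hyps(1) psubset.prems r] by simp
    also have "\<dots> = (?n - 1 + 1) ^ (?j - 1)"
      using sum_Pow_power[of "V - Ro - {x}" "?n - 1"] psubset.hyps(1) \<open>card (V - Ro - {x}) = ?j - 1\<close>
      by simp
    also have "?n - 1 + 1 = ?n" using psubset.hyps(1) \<open>r \<in> V\<close> card_gt_0_iff[of V] by auto
    finally show ?thesis .
  qed
qed

section \<open>Trees as components\<close>

abbreviation component :: "nat set \<Rightarrow> nat set set \<Rightarrow> nat \<Rightarrow> nat set" where
  "component V E v \<equiv> {u \<in> V. conn E v u}"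

lemma component_in_components: "v \<in> V \<Longrightarrow> component V E v \<in> components V E"
  by (simp add: components_def)

lemma components_eq_component:
  assumes "T \<in> components V E" and "x \<in> T"
  shows "T = component V E x"
proof -
  obtain v where T: "T = component V E v" using assms(1) by (auto simp: components_def)
  with assms(2) have "conn E v x" by simp
  have "conn E v u \<longleftrightarrow> conn E x u" for u
  proof
    assume "conn E v u"
    with conn_sym[OF \<open>conn E v x\<close>] show "conn E x u" by (rule rtranclp_trans)
  next
    assume "conn E x u"
    with \<open>conn E v x\<close> show "conn E v u" by (rule rtranclp_trans)
  qed
  then show ?thesis using T by simp
qed

lemma card_eq_1_imp_singleton: "card X = 1 \<Longrightarrow> x \<in> X \<Longrightarrow> X = {x}"
  by (metis card_1_singletonE singletonD)

lemma roots_iff_components: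
  assumes "simple_graph V E"
  shows "(\<forall>v\<in>V. \<exists>!\<rho>. \<rho> \<in> Ro \<and> conn E v \<rho>) \<longleftrightarrow> (\<forall>T\<in>components V E. card (T \<inter> Ro) = 1)"
proof -
  have "(\<exists>!\<rho>. \<rho> \<in> Ro \<and> conn E v \<rho>) \<longleftrightarrow> card (component V E v \<inter> Ro) = 1" if "v \<in> V" for v
  proof -
    have eq: "{\<rho>. \<rho> \<in> Ro \<and> conn E v \<rho>} = component V E v \<inter> Ro"
      using conn_in_vertices[OF assms _ that] by blast
    show ?thesis
      unfolding is_singleton_altdef[symmetric] is_singleton_iff_ex1 eq[symmetric] by simp
  qed
  then show ?thesis by (simp add: components_def)
qed

lemma components_card_ge_2_iff:
  assumes "finite V" and "simple_graph V E"
  shows "(\<forall>T\<in>components V E. 2 \<le> card T) \<longleftrightarrow> V \<subseteq> \<Union>E"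
proof
  assume big: "\<forall>T\<in>components V E. 2 \<le> card T"
  show "V \<subseteq> \<Union>E"
  proof
    fix v assume v: "v \<in> V"
    have "\<not> component V E v \<subseteq> {v}"
    proof
      assume "component V E v \<subseteq> {v}"
      then have "card (component V E v) \<le> 1" using card_mono[of "{v}" "component V E v"] by simp
      with big component_in_components[OF v] show False by fastforce
    qed
    then obtain u where "conn E v u" "u \<noteq> v" by blast
    then show "v \<in> \<Union>E" using conn_imp_in_Union[of E v u] by simp
  qed
next
  assume cover: "V \<subseteq> \<Union>E"
  show "\<forall>T\<in>components V E. 2 \<le> card T"
  proof
    fix T assume "T \<in> components V E"
    then obtain v where v: "v \<in> V" "T = component V E v" by (auto simp: components_def)
    then obtain e where "e \<in> E" "v \<in> e" using cover by blast
    then obtain a b where ab: "a \<noteq> b" "e = {a, b}" "a \<in> V" "b \<in> V"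
      using simple_graph_edgeE[OF assms(2)] by metis
    define u where "u = (if v = a then b else a)"
    have "{v, u} = e" "u \<noteq> v" "u \<in> V" using ab \<open>v \<in> e\<close> by (auto simp: u_def)
    then have "{v, u} \<subseteq> T" using v \<open>e \<in> E\<close> conn_edge[of v u E] by auto
    moreover have "finite T" using v assms(1) by simp
    ultimately show "2 \<le> card T" using card_mono[of T "{v, u}"] \<open>u \<noteq> v\<close> by simp
  qed
qed

lemma single_rootless_component_imp_roots:
  assumes rootless: "\<exists>!T. T \<in> components V E \<and> T \<inter> R = {}"
    and ab: "\<forall>T\<in>components V E. T \<inter> R = {} \<longrightarrow> a \<in> T \<and> b \<in> T"
    and one: "\<forall>T\<in>components V E. T \<inter> R \<noteq> {} \<longrightarrow> card (T \<inter> R) = 1"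
  shows "\<forall>T\<in>components V E. card (T \<inter> insert a R) = 1" and "conn E a b"
proof -
  from rootless obtain T0 where T0: "T0 \<in> components V E \<and> T0 \<inter> R = {}"
    and unique: "\<forall>T. T \<in> components V E \<and> T \<inter> R = {} \<longrightarrow> T = T0" by (rule ex1E)
  have abT0: "a \<in> T0" "b \<in> T0" using bspec[OF ab T0[THEN conjunct1]] T0 by simp_all
  have T0a: "T0 = component V E a" using components_eq_component[OF T0[THEN conjunct1] abT0(1)] .
  show "conn E a b" using abT0(2) T0a by auto
  show "\<forall>T\<in>components V E. card (T \<inter> insert a R) = 1"
  proof
    fix T assume T: "T \<in> components V E"
    show "card (T \<inter> insert a R) = 1"
    proof (cases "T \<inter> R = {}")
      case True
      then have "T \<inter> insert a R = {a}" using unique T abT0(1) by auto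
      then show ?thesis by simp
    next
      case False
      then have "a \<notin> T" using components_eq_component[OF T] T0a T0 by auto
      then have "T \<inter> insert a R = T \<inter> R" by blast
      then show ?thesis using one T False by simp
    qed
  qed
qed

lemma roots_imp_single_rootless_component:
  assumes a: "a \<in> V" "a \<notin> R" and b: "b \<in> V"
    and card1: "\<forall>T\<in>components V E. card (T \<inter> insert a R) = 1" and "conn E a b"
  shows "\<exists>!T. T \<in> components V E \<and> T \<inter> R = {}"
    and "\<forall>T\<in>components V E. T \<inter> R = {} \<longrightarrow> a \<in> T \<and> b \<in> T"
    and "\<forall>T\<in>components V E. T \<inter> R \<noteq> {} \<longrightarrow> card (T \<inter> R) = 1"
proof -
  let ?A = "component V E a"
  have A: "?A \<in> components V E" "a \<in> ?A" using a component_in_components by auto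
  have rootless: "T = ?A" if T: "T \<in> components V E" "T \<inter> R = {}" for T
  proof -
    have "T \<inter> insert a R \<noteq> {}" using bspec[OF card1 T(1)] by auto
    then have "a \<in> T" using T(2) by blast
    then show ?thesis using components_eq_component T(1) by blast
  qed
  have A_R: "?A \<inter> R = {}"
  proof (rule equals0I)
    fix x assume x: "x \<in> ?A \<inter> R"
    then have "x \<in> ?A \<inter> insert a R" by blast
    moreover have "?A \<inter> insert a R = {a}"
      by (rule card_eq_1_imp_singleton[OF bspec[OF card1 A(1)]]) (use A(2) in blast)
    ultimately have "x = a" by simp
    with x a(2) show False by simp
  qed
  show "\<exists>!T. T \<in> components V E \<and> T \<inter> R = {}"
  proof (rule ex1I[of _ ?A])
    show "?A \<in> components V E \<and> ?A \<inter> R = {}" using A(1) A_R by simp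
    show "T = ?A" if "T \<in> components V E \<and> T \<inter> R = {}" for T using rootless that by simp
  qed
  show "\<forall>T\<in>components V E. T \<inter> R = {} \<longrightarrow> a \<in> T \<and> b \<in> T"
  proof (intro ballI impI)
    fix T assume "T \<in> components V E" "T \<inter> R = {}"
    then have "T = ?A" by (rule rootless)
    then show "a \<in> T \<and> b \<in> T" using \<open>conn E a b\<close> a(1) b by simp
  qed
  show "\<forall>T\<in>components V E. T \<inter> R \<noteq> {} \<longrightarrow> card (T \<inter> R) = 1"
  proof (intro ballI impI)
    fix T assume T: "T \<in> components V E" "T \<inter> R \<noteq> {}"
    have "a \<notin> T" using components_eq_component[OF T(1)] A_R T(2) by blast
    then have "T \<inter> R = T \<inter> insert a R" by blast
    then show "card (T \<inter> R) = 1" using bspec[OF card1 T(1)] by simp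
  qed
qed

lemma single_rootless_component_iff:
  assumes "a \<in> V" "a \<notin> R" and "b \<in> V"
  shows "((\<exists>!T. T \<in> components V E \<and> T \<inter> R = {})
          \<and> (\<forall>T\<in>components V E. T \<inter> R = {} \<longrightarrow> a \<in> T \<and> b \<in> T)
          \<and> (\<forall>T\<in>components V E. T \<inter> R \<noteq> {} \<longrightarrow> card (T \<inter> R) = 1))
      \<longleftrightarrow> (\<forall>T\<in>components V E. card (T \<inter> insert a R) = 1) \<and> conn E a b"
proof
  assume L: "(\<exists>!T. T \<in> components V E \<and> T \<inter> R = {})
          \<and> (\<forall>T\<in>components V E. T \<inter> R = {} \<longrightarrow> a \<in> T \<and> b \<in> T)
          \<and> (\<forall>T\<in>components V E. T \<inter> R \<noteq> {} \<longrightarrow> card (T \<inter> R) = 1)"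
  show "(\<forall>T\<in>components V E. card (T \<inter> insert a R) = 1) \<and> conn E a b"
    using single_rootless_component_imp_roots[OF L[THEN conjunct1] L[THEN conjunct2, THEN conjunct1]
        L[THEN conjunct2, THEN conjunct2]] ..
next
  assume "(\<forall>T\<in>components V E. card (T \<inter> insert a R) = 1) \<and> conn E a b"
  then have "\<forall>T\<in>components V E. card (T \<inter> insert a R) = 1" "conn E a b" by simp_all
  note rootless = roots_imp_single_rootless_component[OF assms this]
  show "(\<exists>!T. T \<in> components V E \<and> T \<inter> R = {})
          \<and> (\<forall>T\<in>components V E. T \<inter> R = {} \<longrightarrow> a \<in> T \<and> b \<in> T)
          \<and> (\<forall>T\<in>components V E. T \<inter> R \<noteq> {} \<longrightarrow> card (T \<inter> R) = 1)"
    by (rule conjI[OF rootless(1) conjI[OF rootless(2,3)]])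
qed

lemma rooted_forest_add_isolated:
  assumes "V \<inter> I = {}" and "I \<inter> \<Union>E = {}"
  shows "rooted_forest (V \<union> I) (Ro \<union> I) E \<longleftrightarrow> rooted_forest V Ro E"
proof -
  have isolated: "conn E i u \<longleftrightarrow> u = i" if "i \<in> I" for i u
  proof
    assume "conn E i u"
    show "u = i"
    proof (rule ccontr)
      assume "u \<noteq> i"
      then have "i \<in> \<Union>E" using conn_imp_in_Union[OF \<open>conn E i u\<close>] by simp
      with that assms(2) show False by blast
    qed
  qed simp
  have "simple_graph (V \<union> I) E \<longleftrightarrow> simple_graph V E"
  proof
    assume sg: "simple_graph (V \<union> I) E"
    show "simple_graph V E"
      unfolding simple_graph_def
    proof
      fix e assume e: "e \<in> E"
      then obtain u w where uw: "u \<noteq> w" "e = {u, w}" "u \<in> V \<union> I" "w \<in> V \<union> I"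
        using simple_graph_edgeE[OF sg] by metis
      then have "u \<notin> I" "w \<notin> I" using e assms(2) by blast+
      with uw show "\<exists>u w. u \<noteq> w \<and> e = {u, w} \<and> u \<in> V \<and> w \<in> V" by blast
    qed
  qed (simp add: simple_graph_mono)
  moreover have "(\<exists>!\<rho>. \<rho> \<in> Ro \<union> I \<and> conn E v \<rho>) \<longleftrightarrow> (\<exists>!\<rho>. \<rho> \<in> Ro \<and> conn E v \<rho>)"
    if "v \<in> V" for v
  proof -
    have "\<not> conn E v i" if "i \<in> I" for i
      using isolated[OF that, of v] conn_sym[of E v i] \<open>v \<in> V\<close> that assms(1) by blast
    then have "\<rho> \<in> Ro \<union> I \<and> conn E v \<rho> \<longleftrightarrow> \<rho> \<in> Ro \<and> conn E v \<rho>" for \<rho>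
      by blast
    then show ?thesis by simp
  qed
  moreover have "\<exists>!\<rho>. \<rho> \<in> Ro \<union> I \<and> conn E i \<rho>" if "i \<in> I" for i
    using isolated[OF that] that by (intro ex1I[of _ i]) simp_all
  ultimately show ?thesis
    unfolding rooted_forest_def is_forest_def by (simp add: ball_Un)
qed

lemma single_rootless_forest_iff_rooted_forest:
  assumes "finite V" and "a \<in> V" "a \<notin> R" and "b \<in> V"
  shows "(is_forest V E
          \<and> (\<forall>T \<in> components V E. card T \<ge> 2)
          \<and> (\<exists>!T. T \<in> components V E \<and> T \<inter> R = {})
          \<and> (\<forall>T \<in> components V E. T \<inter> R = {} \<longrightarrow> a \<in> T \<and> b \<in> T)
          \<and> (\<forall>T \<in> components V E. T \<inter> R \<noteq> {} \<longrightarrow> card (T \<inter> R) = 1))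
      \<longleftrightarrow> V \<subseteq> \<Union>E \<and> rooted_forest V (insert a R) E \<and> conn E b a"
proof (cases "simple_graph V E")
  case True
  have "conn E a b \<longleftrightarrow> conn E b a" using conn_sym by blast
  then show ?thesis
    unfolding rooted_forest_def is_forest_def
    by (simp only: components_card_ge_2_iff[OF assms(1) True] roots_iff_components[OF True]
        single_rootless_component_iff[OF assms(2-4)] True simp_thms) blast
qed (simp add: rooted_forest_def is_forest_def)

lemma rooted_forest_extend_roots:
  assumes "M \<inter> S = {}" and R: "R \<subseteq> S" "V = M \<union> R" and "V \<subseteq> \<Union>E"
    and F: "rooted_forest V (insert a R) E"
  shows "V = \<Union>E" and "rooted_forest (M \<union> S) (insert a S) E"
proof -
  show V: "V = \<Union>E" using simple_graph_Union[OF simple_graph_rooted_forest[OF F]] assms(4) by blast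
  have "rooted_forest (V \<union> (S - R)) (insert a R \<union> (S - R)) E"
    using F by (subst rooted_forest_add_isolated) (use R assms(1) V in auto)
  moreover have "V \<union> (S - R) = M \<union> S" "insert a R \<union> (S - R) = insert a S" using R by auto
  ultimately show "rooted_forest (M \<union> S) (insert a S) E" by simp
qed

lemma rooted_forest_restrict_roots:
  assumes "M \<inter> S = {}" and "a \<in> M" "b \<in> M" "a \<noteq> b"
    and F: "rooted_forest (M \<union> S) (insert a S) E" and "conn E b a"
  shows "\<Union>E = M \<union> (S \<inter> \<Union>E)" and "rooted_forest (\<Union>E) (insert a (S \<inter> \<Union>E)) E"
proof -
  let ?R = "S \<inter> \<Union>E"
  have "a \<in> \<Union>E" using conn_imp_in_Union[OF conn_sym[OF \<open>conn E b a\<close>]] assms(4) by simp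
  moreover have "M - insert a S \<subseteq> \<Union>E" using rooted_forest_non_root_in_Union[OF F] by blast
  ultimately have "M \<subseteq> \<Union>E" using assms(1) by blast
  then show VR: "\<Union>E = M \<union> ?R"
    using simple_graph_Union[OF simple_graph_rooted_forest[OF F]] by blast
  have "rooted_forest (\<Union>E \<union> (S - ?R)) (insert a ?R \<union> (S - ?R)) E
      \<longleftrightarrow> rooted_forest (\<Union>E) (insert a ?R) E"
    by (rule rooted_forest_add_isolated) (use VR assms(1) in auto)
  moreover have "\<Union>E \<union> (S - ?R) = M \<union> S" "insert a ?R \<union> (S - ?R) = insert a S"
    using VR by auto
  ultimately show "rooted_forest (\<Union>E) (insert a ?R) E" using F by simp
qed

lemma rooted_forest_isolated_roots_iff:
  assumes "M \<inter> S = {}" and "a \<in> M" "b \<in> M" "a \<noteq> b"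
  shows "(\<exists>R. R \<subseteq> S \<and> V = M \<union> R \<and> V \<subseteq> \<Union>E \<and> rooted_forest V (insert a R) E \<and> conn E b a)
    \<longleftrightarrow> V = \<Union>E \<and> rooted_forest (M \<union> S) (insert a S) E \<and> conn E b a"
proof
  assume "\<exists>R. R \<subseteq> S \<and> V = M \<union> R \<and> V \<subseteq> \<Union>E \<and> rooted_forest V (insert a R) E \<and> conn E b a"
  then obtain R where R: "R \<subseteq> S" "V = M \<union> R" "V \<subseteq> \<Union>E"
    and F: "rooted_forest V (insert a R) E" and "conn E b a" by blast
  from rooted_forest_extend_roots[OF assms(1) R F] \<open>conn E b a\<close>
  show "V = \<Union>E \<and> rooted_forest (M \<union> S) (insert a S) E \<and> conn E b a" by simp
next
  assume "V = \<Union>E \<and> rooted_forest (M \<union> S) (insert a S) E \<and> conn E b a"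
  then have V: "V = \<Union>E" and F: "rooted_forest (M \<union> S) (insert a S) E" and "conn E b a"
    by simp_all
  note restrict = rooted_forest_restrict_roots[OF assms F \<open>conn E b a\<close>]
  show "\<exists>R. R \<subseteq> S \<and> V = M \<union> R \<and> V \<subseteq> \<Union>E \<and> rooted_forest V (insert a R) E \<and> conn E b a"
  proof (rule exI[of _ "S \<inter> \<Union>E"], intro conjI)
    show "V = M \<union> (S \<inter> \<Union>E)" using V restrict(1) by simp
    show "rooted_forest V (insert a (S \<inter> \<Union>E)) E" using V restrict(2) by simp
  qed (use V \<open>conn E b a\<close> in simp_all)
qed

lemma single_rootless_forests_iff:
  assumes "finite M" "finite S" "M \<inter> S = {}" and "a \<in> M" "b \<in> M" "a \<noteq> b"
  shows "(\<exists>R. R \<subseteq> S \<and> V = M \<union> R \<and> is_forest V E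
            \<and> (\<forall>T \<in> components V E. card T \<ge> 2)
            \<and> (\<exists>!T. T \<in> components V E \<and> T \<inter> R = {})
            \<and> (\<forall>T \<in> components V E. T \<inter> R = {} \<longrightarrow> a \<in> T \<and> b \<in> T)
            \<and> (\<forall>T \<in> components V E. T \<inter> R \<noteq> {} \<longrightarrow> card (T \<inter> R) = 1))
     \<longleftrightarrow> V = \<Union>E \<and> rooted_forest (M \<union> S) (insert a S) E \<and> conn E b a"
proof -
  let ?single_rootless = "\<lambda>R. is_forest V E
            \<and> (\<forall>T \<in> components V E. card T \<ge> 2)
            \<and> (\<exists>!T. T \<in> components V E \<and> T \<inter> R = {})
            \<and> (\<forall>T \<in> components V E. T \<inter> R = {} \<longrightarrow> a \<in> T \<and> b \<in> T)
            \<and> (\<forall>T \<in> components V E. T \<inter> R \<noteq> {} \<longrightarrow> card (T \<inter> R) = 1)"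
  let ?rooted = "\<lambda>R. V \<subseteq> \<Union>E \<and> rooted_forest V (insert a R) E \<and> conn E b a"
  have "(\<exists>R. R \<subseteq> S \<and> V = M \<union> R \<and> ?single_rootless R)
      \<longleftrightarrow> (\<exists>R. R \<subseteq> S \<and> V = M \<union> R \<and> ?rooted R)"
  proof (rule ex_cong, rule conj_cong[OF refl])
    fix R assume R: "R \<subseteq> S" and V: "V = M \<union> R"
    have "finite V" using V assms(1) finite_subset[OF R assms(2)] by simp
    moreover have "a \<in> V" using V assms(4) by simp
    moreover have "a \<notin> R" using R assms(3,4) by blast
    moreover have "b \<in> V" using V assms(5) by simp
    ultimately show "?single_rootless R \<longleftrightarrow> ?rooted R"
      by (rule single_rootless_forest_iff_rooted_forest)
  qed
  also have "\<dots> \<longleftrightarrow> V = \<Union>E \<and> rooted_forest (M \<union> S) (insert a S) E \<and> conn E b a"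
    by (rule rooted_forest_isolated_roots_iff[OF assms(3-6)])
  finally show ?thesis .
qed

theorem theorem5p16:
  fixes k n :: nat
  assumes "k \<ge> 1" and "n \<ge> k + 1"
  shows "card {(V, E). \<exists>R. R \<subseteq> {k+2..n} \<and> V = {1..k+1} \<union> R \<and> is_forest V E
            \<and> (\<forall>T \<in> components V E. card T \<ge> 2)
            \<and> (\<exists>!T. T \<in> components V E \<and> T \<inter> R = {})
            \<and> (\<forall>T \<in> components V E. T \<inter> R = {} \<longrightarrow> 1 \<in> T \<and> 2 \<in> T)
            \<and> (\<forall>T \<in> components V E. T \<inter> R \<noteq> {} \<longrightarrow> card (T \<inter> R) = 1)}
         = n ^ (k - 1)"
  (is "card ?S = _")
proof -
  let ?F = "{E. rooted_forest {1..n} (insert 1 {k+2..n}) E \<and> conn E 2 1}"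
  have "{1..k+1} \<union> {k+2..n} = {1..n}" using assms by auto
  then have "(V, E) \<in> ?S \<longleftrightarrow> V = \<Union>E \<and> E \<in> ?F" for V E
    using single_rootless_forests_iff[of "{1..k+1}" "{k+2..n}" 1 2 V E] assms by simp
  then have "?S = (\<lambda>E. (\<Union>E, E)) ` ?F" by auto
  then have "card ?S = card ?F" by (simp add: card_image inj_on_def)
  also have "\<dots> = card {1..n} ^ (card ({1..n} - insert 1 {k+2..n}) - 1)"
    by (rule card_rooted_forests_through) (use assms in auto)
  also have "{1..n} - insert 1 {k+2..n} = {2..k+1}" using assms by auto
  finally show ?thesis by simp
qed

end
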